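(* Let $\Omega$ be a set, $\Phi$ the family of coherent sets of gambles on $\Omega$ together with $\mathcal{L}(\Omega)$, and $At(\Phi)$ its set of atoms. For all $\mathcal{D}_1,\mathcal{D}_2,\mathcal{D}\in\Phi$ and all $x\in Q$: (1) $At(\mathcal{D}_1\cdot\mathcal{D}_2)=At(\mathcal{D}_1)\cap At(\mathcal{D}_2)$; (2) $At(\mathcal{L}(\Omega))=\emptyset$ and $At(\mathcal{L}^+(\Omega))=At(\Phi)$; (3) $At(\epsilon_x(\mathcal{D}))=\sigma_x(At(\mathcal{D}))$.
   Context: A gamble is a bounded function $\Omega\to\mathbb{R}$; $\mathcal{L}(\Omega)$ is the set of gambles, $\mathcal{L}^+(\Omega)=\{f:f\ge0,f\ne0\}$. A set $\mathcal{D}\subseteq\mathcal{L}(\Omega)$ is coherent if $\mathcal{L}^+(\Omega)\subseteq\mathcal{D}$, $0\notin\mathcal{D}$, and $\mathcal{D}$ is closed under addition and under multiplication by positive reals. $\Phi$ = coherent sets $\cup\{\mathcal{L}(\Omega)\}$; $\mathcal{C}(\mathcal{K})=\bigcap\{\mathcal{D}\in\Phi:\mathcal{K}\subseteq\mathcal{D}\}$; combination $\mathcal{D}_1\cdot\mathcal{D}_2=\mathcal{C}(\mathcal{D}_1\cup\mathcal{D}_2)$. $Q$ is an index set, each $x\in Q$ corresponding to a partition $\mathcal{P}_x$ of $\Omega$, with $\{\mathcal{P}_x:x\in Q\}$ closed under join (partition into nonempty intersections of blocks). $\mathcal{L}_x$ is the set of gambles constant on each block of $\mathcal{P}_x$ and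 $\epsilon_x(\mathcal{D})=\mathcal{C}(\mathcal{D}\cap\mathcal{L}_x)$. Atoms are the maximal coherent sets; $At(\Phi)$ is the set of atoms and $At(\mathcal{D})=\{M\in At(\Phi):\mathcal{D}\subseteq M\}$. For $x\in Q$, the sets $At(\epsilon_x(M))$, $M\in At(\Phi)$, form a partition of $At(\Phi)$; $M\equiv_x M'$ means $M,M'$ lie in the same block of it. For $A\subseteq At(\Phi)$, $\sigma_x(A)=\{M\in At(\Phi):\exists M'\in A,\ M\equiv_x M'\}$. *)

theory Defs
  imports Complex_Main
begin

(* Omega is modelled as the (arbitrary) type 'w. *)

definition gambles :: "('w \<Rightarrow> real) set" where
  "gambles = {f. \<exists>B. \<forall>w. \<bar>f w\<bar> \<le> B}"

definition pos_gambles :: "('w \<Rightarrow> real) set" where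
  "pos_gambles = {f \<in> gambles. (\<forall>w. f w \<ge> 0) \<and> f \<noteq> (\<lambda>w. 0)}"

definition coherent :: "('w \<Rightarrow> real) set \<Rightarrow> bool" where
  "coherent D \<longleftrightarrow> D \<subseteq> gambles \<and> pos_gambles \<subseteq> D \<and> (\<lambda>w. 0) \<notin> D
     \<and> (\<forall>f\<in>D. \<forall>g\<in>D. (\<lambda>w. f w + g w) \<in> D)
     \<and> (\<forall>f\<in>D. \<forall>c::real. c > 0 \<longrightarrow> (\<lambda>w. c * f w) \<in> D)"

definition Phi :: "('w \<Rightarrow> real) set set" where
  "Phi = {D. coherent D} \<union> {gambles}"

definition closure_C :: "('w \<Rightarrow> real) set \<Rightarrow> ('w \<Rightarrow> real) set" where
  "closure_C K = \<Inter>{D \<in> Phi. K \<subseteq> D}"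

definition combine :: "('w \<Rightarrow> real) set \<Rightarrow> ('w \<Rightarrow> real) set \<Rightarrow> ('w \<Rightarrow> real) set" where
  "combine D1 D2 = closure_C (D1 \<union> D2)"

definition atoms :: "('w \<Rightarrow> real) set set" where
  "atoms = {M. coherent M \<and> (\<forall>D. coherent D \<and> M \<subseteq> D \<longrightarrow> D = M)}"

definition At :: "('w \<Rightarrow> real) set \<Rightarrow> ('w \<Rightarrow> real) set set" where
  "At D = {M \<in> atoms. D \<subseteq> M}"

definition is_partition :: "'w set set \<Rightarrow> bool" where
  "is_partition P \<longleftrightarrow> (\<forall>B\<in>P. B \<noteq> {}) \<and> \<Union>P = UNIV
     \<and> (\<forall>B\<in>P. \<forall>B'\<in>P. B \<noteq> B' \<longrightarrow> B \<inter> B' = {})"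

definition part_join :: "'w set set \<Rightarrow> 'w set set \<Rightarrow> 'w set set" where
  "part_join P1 P2 = {B \<inter> B' | B B'. B \<in> P1 \<and> B' \<in> P2 \<and> B \<inter> B' \<noteq> {}}"

(* L_x : gambles constant on each block of the partition P *)
definition meas_gambles :: "'w set set \<Rightarrow> ('w \<Rightarrow> real) set" where
  "meas_gambles P = {f \<in> gambles. \<forall>B\<in>P. \<forall>u\<in>B. \<forall>v\<in>B. f u = f v}"

definition eps_x :: "'w set set \<Rightarrow> ('w \<Rightarrow> real) set \<Rightarrow> ('w \<Rightarrow> real) set" where
  "eps_x P D = closure_C (D \<inter> meas_gambles P)"

definition equiv_x :: "'w set set \<Rightarrow> ('w \<Rightarrow> real) set \<Rightarrow> ('w \<Rightarrow> real) set \<Rightarrow> bool" where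
  "equiv_x P M M' \<longleftrightarrow> (\<exists>N\<in>atoms. M \<in> At (eps_x P N) \<and> M' \<in> At (eps_x P N))"

definition sigma_x :: "'w set set \<Rightarrow> ('w \<Rightarrow> real) set set \<Rightarrow> ('w \<Rightarrow> real) set set" where
  "sigma_x P A = {M \<in> atoms. \<exists>M'\<in>A. equiv_x P M M'}"

end

theory Submission
  imports Defs "HOL-Library.Function_Algebras"
begin

text \<open>An atom M contains, for every nonzero gamble f, either f or -f: otherwise the cone
  generated by M and -f would be a strictly larger coherent set; and by Zorn's lemma every
  coherent set lies in an atom. Since L_x is closed under negation, this dichotomy shows that
  two atoms are equivalent modulo x exactly when they agree on L_x, so every atom of
  sigma_x (At D) contains D \<inter> L_x. Conversely, if an atom M contains D \<inter> L_x, then D and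
  M \<inter> L_x generate a coherent set (a sum d + m = 0 would put d = -m into D \<inter> L_x \<subseteq> M),
  and any atom above it contains D and agrees with M on L_x.\<close>

lemma gambles_add: "f \<in> gambles \<Longrightarrow> g \<in> gambles \<Longrightarrow> f + g \<in> gambles"
proof -
  assume "f \<in> gambles" "g \<in> gambles"
  then obtain B1 B2 where "\<forall>w. \<bar>f w\<bar> \<le> B1" "\<forall>w. \<bar>g w\<bar> \<le> B2"
    by (auto simp: gambles_def)
  then have "\<forall>w. \<bar>(f + g) w\<bar> \<le> B1 + B2"
    by (metis abs_triangle_ineq add_mono order_trans plus_fun_apply)
  then show ?thesis by (auto simp: gambles_def)
qed

lemma gambles_scale: "f \<in> gambles \<Longrightarrow> (\<lambda>w. c * f w) \<in> gambles"
proof -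
  assume "f \<in> gambles"
  then obtain B where "\<forall>w. \<bar>f w\<bar> \<le> B" by (auto simp: gambles_def)
  then have "\<forall>w. \<bar>c * f w\<bar> \<le> \<bar>c\<bar> * B"
    by (simp add: abs_mult mult_left_mono)
  then show ?thesis by (auto simp: gambles_def)
qed

lemma gambles_uminus: "f \<in> gambles \<Longrightarrow> - f \<in> gambles"
  unfolding fun_Compl_def using gambles_scale[of f "- 1"] by simp

lemma zero_in_gambles: "0 \<in> gambles"
  by (auto simp: gambles_def)

lemma meas_gamblesI:
  assumes "f \<in> gambles" "\<And>B u v. B \<in> P \<Longrightarrow> u \<in> B \<Longrightarrow> v \<in> B \<Longrightarrow> f u = f v"
  shows "f \<in> meas_gambles P"
  using assms unfolding meas_gambles_def by blast

lemma meas_gamblesD: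
  assumes "f \<in> meas_gambles P"
  shows "f \<in> gambles" and "B \<in> P \<Longrightarrow> u \<in> B \<Longrightarrow> v \<in> B \<Longrightarrow> f u = f v"
  using assms unfolding meas_gambles_def by blast+

lemma zero_in_meas_gambles: "0 \<in> meas_gambles P"
  by (simp add: meas_gamblesI zero_in_gambles)

lemma meas_gambles_add:
  assumes f: "f \<in> meas_gambles P" and g: "g \<in> meas_gambles P"
  shows "f + g \<in> meas_gambles P"
proof (rule meas_gamblesI)
  show "f + g \<in> gambles" using f g by (simp add: meas_gamblesD(1) gambles_add)
  fix B u v assume block: "B \<in> P" "u \<in> B" "v \<in> B"
  show "(f + g) u = (f + g) v"
    using meas_gamblesD(2)[OF f block] meas_gamblesD(2)[OF g block] by simp
qed

lemma meas_gambles_scale: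
  assumes f: "f \<in> meas_gambles P"
  shows "(\<lambda>w. c * f w) \<in> meas_gambles P"
proof (rule meas_gamblesI)
  show "(\<lambda>w. c * f w) \<in> gambles" using f by (simp add: meas_gamblesD(1) gambles_scale)
  fix B u v assume block: "B \<in> P" "u \<in> B" "v \<in> B"
  show "c * f u = c * f v" using meas_gamblesD(2)[OF f block] by simp
qed

lemma meas_gambles_uminus:
  assumes f: "f \<in> meas_gambles P"
  shows "- f \<in> meas_gambles P"
proof (rule meas_gamblesI)
  show "- f \<in> gambles" using f by (simp add: meas_gamblesD(1) gambles_uminus)
  fix B u v assume block: "B \<in> P" "u \<in> B" "v \<in> B"
  show "(- f) u = (- f) v" using meas_gamblesD(2)[OF f block] by simp
qed

definition blunt_cone :: "('w \<Rightarrow> real) set \<Rightarrow> bool" where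
  "blunt_cone X \<longleftrightarrow> X \<subseteq> gambles \<and> 0 \<notin> X
     \<and> (\<forall>f\<in>X. \<forall>g\<in>X. f + g \<in> X) \<and> (\<forall>f\<in>X. \<forall>c>0. (\<lambda>w. c * f w) \<in> X)"

lemma blunt_coneD:
  assumes "blunt_cone X"
  shows "X \<subseteq> gambles" and "0 \<notin> X"
    and "f \<in> X \<Longrightarrow> g \<in> X \<Longrightarrow> f + g \<in> X"
    and "f \<in> X \<Longrightarrow> c > 0 \<Longrightarrow> (\<lambda>w. c * f w) \<in> X"
  using assms unfolding blunt_cone_def by blast+

lemma blunt_cone_uminus_notin: "blunt_cone X \<Longrightarrow> f \<in> X \<Longrightarrow> - f \<notin> X"
  using blunt_coneD(2)[of X] blunt_coneD(3)[of X f "- f"] by auto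

lemma coherent_iff_blunt_cone: "coherent D \<longleftrightarrow> blunt_cone D \<and> pos_gambles \<subseteq> D"
  unfolding coherent_def blunt_cone_def plus_fun_def zero_fun_def by blast

lemmas coherentD = blunt_coneD[OF coherent_iff_blunt_cone[THEN iffD1, THEN conjunct1]]

lemma coherent_uminus_notin: "coherent D \<Longrightarrow> f \<in> D \<Longrightarrow> - f \<notin> D"
  by (simp add: coherent_iff_blunt_cone blunt_cone_uminus_notin)

lemma atoms_coherent: "M \<in> atoms \<Longrightarrow> coherent M"
  by (simp add: atoms_def)

lemma blunt_cone_Int_meas_gambles: "blunt_cone X \<Longrightarrow> blunt_cone (X \<inter> meas_gambles P)"
  unfolding blunt_cone_def by (auto intro: meas_gambles_add meas_gambles_scale)

definition ray :: "('w \<Rightarrow> real) \<Rightarrow> ('w \<Rightarrow> real) set" where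
  "ray g = {(\<lambda>w. c * g w) | c. c > 0}"

lemma blunt_cone_ray:
  assumes "g \<in> gambles" "g \<noteq> 0"
  shows "blunt_cone (ray g)"
  unfolding blunt_cone_def
proof (intro conjI ballI allI impI)
  show "ray g \<subseteq> gambles" using assms(1) by (auto simp: ray_def gambles_scale)
  show "0 \<notin> ray g" using assms(2) by (auto simp: ray_def fun_eq_iff)
next
  fix f h assume "f \<in> ray g" "h \<in> ray g"
  then obtain c d where "c > 0" "d > 0" "f = (\<lambda>w. c * g w)" "h = (\<lambda>w. d * g w)"
    by (auto simp: ray_def)
  then show "f + h \<in> ray g"
    unfolding ray_def by (auto intro!: exI[of _ "c + d"] simp: fun_eq_iff algebra_simps)
next
  fix f and c :: real assume "f \<in> ray g" "c > 0"
  then obtain d where "d > 0" "f = (\<lambda>w. d * g w)" by (auto simp: ray_def)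
  with \<open>c > 0\<close> show "(\<lambda>w. c * f w) \<in> ray g"
    unfolding ray_def by (auto intro!: exI[of _ "c * d"])
qed

lemma self_in_ray: "g \<in> ray g"
  unfolding ray_def by (auto intro!: exI[of _ 1])

definition cone_sum :: "'a::monoid_add set \<Rightarrow> 'a set \<Rightarrow> 'a set" where
  "cone_sum A B = {a + b | a b. a \<in> insert 0 A \<and> b \<in> insert 0 B} - {0}"

lemma subset_cone_sum_left: "0 \<notin> A \<Longrightarrow> A \<subseteq> cone_sum A B"
  unfolding cone_sum_def by force

lemma subset_cone_sum_right: "0 \<notin> B \<Longrightarrow> B \<subseteq> cone_sum A B"
  unfolding cone_sum_def by force

lemma blunt_cone_insert_zero_add:
  "blunt_cone A \<Longrightarrow> a \<in> insert 0 A \<Longrightarrow> b \<in> insert 0 A \<Longrightarrow> a + b \<in> insert 0 A"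
  using blunt_coneD(3)[of A a b] by auto

lemma blunt_cone_insert_zero_scale:
  "blunt_cone A \<Longrightarrow> a \<in> insert 0 A \<Longrightarrow> c > 0 \<Longrightarrow> (\<lambda>w. c * a w) \<in> insert 0 A"
  by (auto dest: blunt_coneD(4) simp: zero_fun_def)

lemma insert_zero_add_eq_0D:
  fixes A B :: "'a::group_add set"
  assumes "0 \<notin> A" and disjoint: "\<And>b. b \<in> B \<Longrightarrow> - b \<notin> A"
    and "a \<in> insert 0 A" "b \<in> insert 0 B" "a + b = 0"
  shows "a = 0 \<and> b = 0"
proof -
  have "a = - b" using \<open>a + b = 0\<close> by (rule eq_neg_iff_add_eq_0[THEN iffD2])
  then show ?thesis using assms by auto
qed

lemma blunt_cone_cone_sum:
  assumes A: "blunt_cone A" and B: "blunt_cone B"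
    and disjoint: "\<And>b. b \<in> B \<Longrightarrow> - b \<notin> A"
  shows "blunt_cone (cone_sum A B)"
proof -
  have both_zero: "a = 0 \<and> b = 0" if "a \<in> insert 0 A" "b \<in> insert 0 B" "a + b = 0" for a b
    using insert_zero_add_eq_0D[OF blunt_coneD(2)[OF A] _ that] disjoint by blast
  show ?thesis
    unfolding blunt_cone_def
  proof (intro conjI ballI allI impI)
    show "cone_sum A B \<subseteq> gambles"
      using blunt_coneD(1)[OF A] blunt_coneD(1)[OF B]
      by (auto simp: cone_sum_def zero_in_gambles intro!: gambles_add)
    show "0 \<notin> cone_sum A B" by (simp add: cone_sum_def)
  next
    fix f g assume "f \<in> cone_sum A B" "g \<in> cone_sum A B"
    then obtain a1 b1 a2 b2 where
      ab: "a1 \<in> insert 0 A" "b1 \<in> insert 0 B" "a2 \<in> insert 0 A" "b2 \<in> insert 0 B"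
      and fg: "f = a1 + b1" "g = a2 + b2" "f \<noteq> 0"
      unfolding cone_sum_def by blast
    have decomp: "f + g = (a1 + a2) + (b1 + b2)" using fg by (simp add: algebra_simps)
    moreover have sums: "a1 + a2 \<in> insert 0 A" "b1 + b2 \<in> insert 0 B"
      using blunt_cone_insert_zero_add[OF A ab(1,3)] blunt_cone_insert_zero_add[OF B ab(2,4)] .
    moreover have "f + g \<noteq> 0"
    proof
      assume "f + g = 0"
      then have "a1 + a2 = 0" "b1 + b2 = 0"
        using both_zero[OF sums] decomp by auto
      then have "a1 = 0" "b1 = 0"
        using insert_zero_add_eq_0D[OF blunt_coneD(2)[OF A] _ ab(1,3)]
          insert_zero_add_eq_0D[OF blunt_coneD(2)[OF B] _ ab(2,4)]
          blunt_cone_uminus_notin[OF A] blunt_cone_uminus_notin[OF B] by blast+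
      then show False using fg by simp
    qed
    ultimately show "f + g \<in> cone_sum A B" unfolding cone_sum_def by blast
  next
    fix f and c :: real assume "f \<in> cone_sum A B" "c > 0"
    then obtain a b where ab: "a \<in> insert 0 A" "b \<in> insert 0 B" "f = a + b" "f \<noteq> 0"
      unfolding cone_sum_def by blast
    have "(\<lambda>w. c * f w) = (\<lambda>w. c * a w) + (\<lambda>w. c * b w)"
      using ab(3) by (simp add: fun_eq_iff algebra_simps)
    moreover have "(\<lambda>w. c * a w) \<in> insert 0 A" "(\<lambda>w. c * b w) \<in> insert 0 B"
      using blunt_cone_insert_zero_scale[OF A ab(1) \<open>c > 0\<close>]
        blunt_cone_insert_zero_scale[OF B ab(2) \<open>c > 0\<close>] by auto
    moreover have "(\<lambda>w. c * f w) \<noteq> 0"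
      using ab(4) \<open>c > 0\<close> by (auto simp: fun_eq_iff)
    ultimately show "(\<lambda>w. c * f w) \<in> cone_sum A B" unfolding cone_sum_def by blast
  qed
qed

lemma coherent_cone_sum:
  assumes A: "coherent A" and B: "blunt_cone B" and disjoint: "\<And>b. b \<in> B \<Longrightarrow> - b \<notin> A"
  shows "coherent (cone_sum A B)"
proof -
  have "pos_gambles \<subseteq> A" "A \<subseteq> cone_sum A B"
    using A coherentD(2)[OF A] subset_cone_sum_left by (auto simp: coherent_iff_blunt_cone)
  moreover have "blunt_cone (cone_sum A B)"
    using A B disjoint by (simp add: coherent_iff_blunt_cone blunt_cone_cone_sum)
  ultimately show ?thesis by (auto simp: coherent_iff_blunt_cone)
qed

lemma blunt_cone_Union_chain:
  assumes cones: "\<And>X. X \<in> C \<Longrightarrow> blunt_cone X" and chain: "chain\<^sub>\<subseteq> C"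
  shows "blunt_cone (\<Union>C)"
  unfolding blunt_cone_def
proof (intro conjI ballI allI impI)
  show "\<Union>C \<subseteq> gambles" "0 \<notin> \<Union>C" using cones blunt_coneD(1,2) by blast+
next
  fix f g assume "f \<in> \<Union>C" "g \<in> \<Union>C"
  then obtain X Y where "X \<in> C" "Y \<in> C" "f \<in> X" "g \<in> Y" by blast
  with chain obtain Z where "Z \<in> C" "f \<in> Z" "g \<in> Z" unfolding chain_subset_def by blast
  then show "f + g \<in> \<Union>C" using cones blunt_coneD(3) by blast
next
  fix f and c :: real assume "f \<in> \<Union>C" "c > 0"
  then show "(\<lambda>w. c * f w) \<in> \<Union>C" using cones blunt_coneD(4) by blast
qed

lemma coherent_Union_chain:
  assumes "C \<noteq> {}" "\<And>X. X \<in> C \<Longrightarrow> coherent X" "chain\<^sub>\<subseteq> C"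
  shows "coherent (\<Union>C)"
  using assms blunt_cone_Union_chain[of C] unfolding coherent_iff_blunt_cone by blast

lemma ex_atom_superset:
  assumes "coherent D"
  shows "\<exists>M\<in>atoms. D \<subseteq> M"
proof -
  let ?E = "{E. coherent E \<and> D \<subseteq> E}"
  have "\<exists>M\<in>?E. \<forall>X\<in>?E. M \<subseteq> X \<longrightarrow> X = M"
  proof (rule subset_Zorn_nonempty)
    show "?E \<noteq> {}" using assms by blast
  next
    fix C assume "C \<noteq> {}" "subset.chain ?E C"
    then have "coherent (\<Union>C)" "D \<subseteq> \<Union>C"
      using coherent_Union_chain[of C] unfolding subset_chain_def chain_subset_def by blast+
    then show "\<Union>C \<in> ?E" by blast
  qed
  then obtain M where "coherent M" "D \<subseteq> M" "\<forall>X\<in>?E. M \<subseteq> X \<longrightarrow> X = M" by blast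
  moreover from this have "M \<in> atoms" unfolding atoms_def by auto
  ultimately show ?thesis by blast
qed

lemma atom_mem_or_uminus_mem:
  assumes M: "M \<in> atoms" and f: "f \<in> gambles" "f \<noteq> 0"
  shows "f \<in> M \<or> - f \<in> M"
proof (cases "f \<in> M")
  case False
  have cM: "coherent M" using M by (rule atoms_coherent)
  have ray: "blunt_cone (ray (- f))" using f by (simp add: blunt_cone_ray gambles_uminus)
  have "- b \<notin> M" if b: "b \<in> ray (- f)" for b
  proof
    assume "- b \<in> M"
    obtain c where c: "c > 0" "b = (\<lambda>w. c * (- f) w)" using b by (auto simp: ray_def)
    then have "f = (\<lambda>w. (1 / c) * (- b) w)" by (auto simp: fun_eq_iff)
    moreover have "(\<lambda>w. (1 / c) * (- b) w) \<in> M"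
      using \<open>- b \<in> M\<close> c(1) by (intro coherentD(4)[OF cM]) (simp_all add: fun_Compl_def)
    ultimately show False using False by simp
  qed
  then have "coherent (cone_sum M (ray (- f)))" by (rule coherent_cone_sum[OF cM ray])
  moreover have "M \<subseteq> cone_sum M (ray (- f))"
    using coherentD(2)[OF cM] by (rule subset_cone_sum_left)
  ultimately have "cone_sum M (ray (- f)) = M" using M unfolding atoms_def by blast
  then show ?thesis
    using subset_cone_sum_right[OF blunt_coneD(2)[OF ray]] self_in_ray by blast
qed simp

lemma atoms_Int_eq:
  assumes N: "N \<in> atoms" and M: "M \<in> atoms" and L: "\<And>f. f \<in> L \<Longrightarrow> - f \<in> L"
    and sub: "N \<inter> L \<subseteq> M"
  shows "N \<inter> L = M \<inter> L"
proof -
  have "f \<in> N" if f: "f \<in> M \<inter> L" for f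
  proof -
    have cM: "coherent M" using M by (rule atoms_coherent)
    then have "f \<in> gambles" "f \<noteq> 0" using f coherentD(1,2)[OF cM] by blast+
    moreover have "- f \<notin> N"
      using sub L f coherent_uminus_notin[OF cM] by blast
    ultimately show "f \<in> N" using atom_mem_or_uminus_mem[OF N] by blast
  qed
  then show ?thesis using sub by blast
qed

lemma At_closure_C: "At (closure_C K) = {M \<in> atoms. K \<subseteq> M}"
  unfolding At_def closure_C_def Phi_def atoms_def by blast

lemma equiv_x_iff:
  assumes M: "M \<in> atoms" and M': "M' \<in> atoms"
  shows "equiv_x P M M' \<longleftrightarrow> M \<inter> meas_gambles P = M' \<inter> meas_gambles P"
proof
  assume "equiv_x P M M'"
  then obtain N where N: "N \<in> atoms"
    and "N \<inter> meas_gambles P \<subseteq> M" "N \<inter> meas_gambles P \<subseteq> M'"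
    unfolding equiv_x_def eps_x_def At_closure_C by blast
  then have "N \<inter> meas_gambles P = M \<inter> meas_gambles P" "N \<inter> meas_gambles P = M' \<inter> meas_gambles P"
    using atoms_Int_eq[OF N M meas_gambles_uminus] atoms_Int_eq[OF N M' meas_gambles_uminus] by auto
  then show "M \<inter> meas_gambles P = M' \<inter> meas_gambles P" by simp
next
  assume "M \<inter> meas_gambles P = M' \<inter> meas_gambles P"
  then show "equiv_x P M M'"
    using M M' unfolding equiv_x_def eps_x_def At_closure_C by blast
qed

lemma ex_atom_superset_Int_meas_gambles:
  assumes D: "coherent D" and M: "M \<in> atoms" and sub: "D \<inter> meas_gambles P \<subseteq> M"
  shows "\<exists>M'\<in>atoms. D \<subseteq> M' \<and> M \<inter> meas_gambles P \<subseteq> M'"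
proof -
  let ?K = "M \<inter> meas_gambles P"
  have cM: "coherent M" using M by (rule atoms_coherent)
  have K: "blunt_cone ?K"
    using cM by (simp add: coherent_iff_blunt_cone blunt_cone_Int_meas_gambles)
  have "- b \<notin> D" if "b \<in> ?K" for b
    using that sub meas_gambles_uminus coherent_uminus_notin[OF cM] by blast
  then have "coherent (cone_sum D ?K)" by (rule coherent_cone_sum[OF D K])
  then obtain M' where "M' \<in> atoms" "cone_sum D ?K \<subseteq> M'" using ex_atom_superset by blast
  moreover have "D \<subseteq> cone_sum D ?K" "?K \<subseteq> cone_sum D ?K"
    using subset_cone_sum_left[OF coherentD(2)[OF D]] subset_cone_sum_right[OF blunt_coneD(2)[OF K]]
    by blast+
  ultimately show ?thesis by blast
qed

lemma At_eps_x: "At (eps_x P D) = {M \<in> atoms. D \<inter> meas_gambles P \<subseteq> M}"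
  unfolding eps_x_def by (rule At_closure_C)

lemma sigma_x_At:
  "sigma_x P (At D) = {M \<in> atoms. \<exists>M'\<in>atoms. D \<subseteq> M' \<and> M \<inter> meas_gambles P = M' \<inter> meas_gambles P}"
  unfolding sigma_x_def At_def using equiv_x_iff by blast

lemma At_eps_x_eq_sigma_x:
  assumes "D \<in> Phi"
  shows "At (eps_x P D) = sigma_x P (At D)"
proof
  show "At (eps_x P D) \<subseteq> sigma_x P (At D)"
  proof
    fix M assume "M \<in> At (eps_x P D)"
    then have M: "M \<in> atoms" "D \<inter> meas_gambles P \<subseteq> M" by (simp_all add: At_eps_x)
    have "0 \<notin> M" using coherentD(2)[OF atoms_coherent[OF M(1)]] .
    then have "D \<noteq> gambles" using M(2) zero_in_gambles zero_in_meas_gambles by blast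
    then have "coherent D" using assms by (simp add: Phi_def)
    then obtain M' where M': "M' \<in> atoms" "D \<subseteq> M'" "M \<inter> meas_gambles P \<subseteq> M'"
      using ex_atom_superset_Int_meas_gambles M by blast
    then have "M \<inter> meas_gambles P = M' \<inter> meas_gambles P"
      using atoms_Int_eq[OF M(1) M'(1) meas_gambles_uminus] by blast
    then show "M \<in> sigma_x P (At D)" using M(1) M' by (auto simp: sigma_x_At)
  qed
next
  show "sigma_x P (At D) \<subseteq> At (eps_x P D)"
    by (auto simp: sigma_x_At At_eps_x)
qed

lemma At_combine: "At (combine D1 D2) = At D1 \<inter> At D2"
  unfolding combine_def At_closure_C by (auto simp: At_def)

lemma At_gambles: "At gambles = {}"
  using zero_in_gambles coherentD(2) by (auto simp: At_def atoms_def)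

lemma At_pos_gambles: "At pos_gambles = atoms"
  by (auto simp: At_def atoms_def coherent_def)

theorem theorem5:
  fixes Part :: "'q \<Rightarrow> 'w set set"
  assumes parts: "\<And>x. is_partition (Part x)"
    and join_closed: "\<And>x y. \<exists>z. Part z = part_join (Part x) (Part y)"
  shows "(\<forall>D1\<in>(Phi :: ('w \<Rightarrow> real) set set). \<forall>D2\<in>Phi. At (combine D1 D2) = At D1 \<inter> At D2)
    \<and> At (gambles :: ('w \<Rightarrow> real) set) = {}
    \<and> At (pos_gambles :: ('w \<Rightarrow> real) set) = atoms
    \<and> (\<forall>D\<in>Phi. \<forall>x. At (eps_x (Part x) D) = sigma_x (Part x) (At D))"
  using At_combine At_gambles At_pos_gambles At_eps_x_eq_sigma_x by blast

end
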